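(* Let $\mathbf{m}_0=(x_0,y_0),\mathbf{m}_1=(x_1,y_1),\mathbf{m}_2=(x_2,y_2)\in\mathbb{R}^2$ be non-collinear and let $\tilde{E}$ be the bifurcation curve, i.e. the degree-5 plane algebraic curve with Cartesian equation $F(\mathbf{x})=0$. Then $\tilde{E}$ has three real ideal points $[x_1-x_2:y_1-y_2:0]$, $[x_2-x_0:y_2-y_0:0]$, $[x_0-x_1:y_0-y_1:0]$ and two complex ideal points $[1:i:0]$, $[1:-i:0]$. The three real asymptotic lines of $\tilde{E}$ have Cartesian equations \[ L_0:\ 4\ast(\mathbf{d}_{12}\wedge\mathbf{d}_0(\mathbf{x}))-3W=0,\quad L_1:\ 4\ast(\mathbf{d}_{20}\wedge\mathbf{d}_1(\mathbf{x}))-3W=0,\quad L_2:\ 4\ast(\mathbf{d}_{01}\wedge\mathbf{d}_2(\mathbf{x}))-3W=0. \] Finally, $L_0\cap L_1\cap L_2=\emptyset$.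
   Context: Notation: for $\mathbf{u}=(u_1,u_2),\mathbf{v}=(v_1,v_2)\in\mathbb{R}^2$, $\ast(\mathbf{u}\wedge\mathbf{v})=u_1v_2-u_2v_1$. $\mathbf{d}_i(\mathbf{x})=\mathbf{x}-\mathbf{m}_i$, $\mathbf{d}_{ji}=\mathbf{m}_j-\mathbf{m}_i$, $d_i(\mathbf{x})=\Vert\mathbf{d}_i(\mathbf{x})\Vert$, $d_{ji}=\Vert\mathbf{d}_{ji}\Vert$, $W=\ast(\mathbf{d}_{10}\wedge\mathbf{d}_{20})$. Bifurcation curve: with TDOA map $\boldsymbol{\tau}_2(\mathbf{x})=(d_1(\mathbf{x})-d_0(\mathbf{x}),d_2(\mathbf{x})-d_0(\mathbf{x}))$ and ellipse $E:\Vert\tau_2\mathbf{d}_{10}-\tau_1\mathbf{d}_{20}\Vert^2-W^2=0$, $\tilde{E}=\boldsymbol{\tau}_2^{-1}(E)$, whose Cartesian equation is $F(\mathbf{x})=0$ with $F=Q^4-8Q^2(P_{01}^2+P_{12}^2+P_{20}^2)+64QP_{01}P_{12}P_{20}+16(P_{01}^4+P_{12}^4+P_{20}^4)-32(P_{01}^2P_{12}^2+P_{12}^2P_{20}^2+P_{20}^2P_{01}^2)$, a polynomial of degree 5 in $(x,y)$, where $\mathbf{D}_0(\mathbf{x})=d_0(\mathbf{x})\mathbf{d}_{12}$, $\mathbf{D}_1(\mathbf{x})=d_1(\mathbf{x})\mathbf{d}_{20}$, $\mathbf{D}_2(\mathbf{x})=d_2(\mathbf{x})\mathbf{d}_{01}$,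 $Q(\mathbf{x})=\sum_i\Vert\mathbf{D}_i(\mathbf{x})\Vert^2-W^2$, $P_{ij}(\mathbf{x})=\mathbf{D}_i(\mathbf{x})\cdot\mathbf{D}_j(\mathbf{x})$. Projective conventions: embed the affine plane into $\mathbb{P}^2$ via $x=X/U$, $y=Y/U$, with ideal line $U=0$; the ideal points of a curve are its intersections with the ideal line (over $\mathbb{C}$); an asymptotic line is an affine line tangent to the curve at one of its smooth ideal points. *)

theory Defs
  imports "HOL-Analysis.Analysis"
begin

text \<open>Points of the real plane are pairs of reals; norm and inner product are
  the Euclidean ones on pairs of reals (Product_Vector).\<close>

definition wedge :: "real \<times> real \<Rightarrow> real \<times> real \<Rightarrow> real" where
  "wedge u v = fst u * snd v - snd u * fst v"

definition Wdet :: "real \<times> real \<Rightarrow> real \<times> real \<Rightarrow> real \<times> real \<Rightarrow> real" where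
  "Wdet m0 m1 m2 = wedge (m1 - m0) (m2 - m0)"

text \<open>The Cartesian equation F of the bifurcation curve, literally as in the paper
  (d_i(x) = norm (x - m_i), d_ji = m_j - m_i).\<close>
definition bifF :: "real \<times> real \<Rightarrow> real \<times> real \<Rightarrow> real \<times> real \<Rightarrow> real \<times> real \<Rightarrow> real" where
  "bifF m0 m1 m2 x =
    (let W = Wdet m0 m1 m2;
         D0 = norm (x - m0) *\<^sub>R (m1 - m2);
         D1 = norm (x - m1) *\<^sub>R (m2 - m0);
         D2 = norm (x - m2) *\<^sub>R (m0 - m1);
         Q = (norm D0)\<^sup>2 + (norm D1)\<^sup>2 + (norm D2)\<^sup>2 - W\<^sup>2;
         P01 = D0 \<bullet> D1; P12 = D1 \<bullet> D2; P20 = D2 \<bullet> D0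
     in Q^4 - 8 * Q\<^sup>2 * (P01\<^sup>2 + P12\<^sup>2 + P20\<^sup>2) + 64 * Q * P01 * P12 * P20
        + 16 * (P01^4 + P12^4 + P20^4)
        - 32 * (P01\<^sup>2 * P12\<^sup>2 + P12\<^sup>2 * P20\<^sup>2 + P20\<^sup>2 * P01\<^sup>2))"

text \<open>The same polynomial, written in terms of squared distances only, so that it
  extends to complex arguments (needed for the complex ideal points).\<close>
definition bifFc :: "real \<times> real \<Rightarrow> real \<times> real \<Rightarrow> real \<times> real \<Rightarrow> complex \<Rightarrow> complex \<Rightarrow> complex" where
  "bifFc m0 m1 m2 z w =
    (let W = complex_of_real (Wdet m0 m1 m2);
         v0 = m1 - m2; v1 = m2 - m0; v2 = m0 - m1;
         s0 = (z - of_real (fst m0))\<^sup>2 + (w - of_real (snd m0))\<^sup>2;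
         s1 = (z - of_real (fst m1))\<^sup>2 + (w - of_real (snd m1))\<^sup>2;
         s2 = (z - of_real (fst m2))\<^sup>2 + (w - of_real (snd m2))\<^sup>2;
         Q = s0 * of_real ((norm v0)\<^sup>2) + s1 * of_real ((norm v1)\<^sup>2)
             + s2 * of_real ((norm v2)\<^sup>2) - W\<^sup>2;
         S01 = s0 * s1 * of_real ((v0 \<bullet> v1)\<^sup>2);
         S12 = s1 * s2 * of_real ((v1 \<bullet> v2)\<^sup>2);
         S20 = s2 * s0 * of_real ((v2 \<bullet> v0)\<^sup>2);
         PPP = s0 * s1 * s2 * of_real ((v0 \<bullet> v1) * (v1 \<bullet> v2) * (v2 \<bullet> v0))
     in Q^4 - 8 * Q\<^sup>2 * (S01 + S12 + S20) + 64 * Q * PPP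
        + 16 * (S01\<^sup>2 + S12\<^sup>2 + S20\<^sup>2)
        - 32 * (S01 * S12 + S12 * S20 + S20 * S01))"

lemma norm_sq_pair: "(norm (x - m :: real \<times> real))\<^sup>2 = (fst x - fst m)\<^sup>2 + (snd x - snd m)\<^sup>2"
  by (cases x; cases m) (simp add: norm_Pair)

lemma bifFc_real:
  "bifFc m0 m1 m2 (of_real (fst x)) (of_real (snd x)) = of_real (bifF m0 m1 m2 x)"
proof -
  have sq: "\<And>m. (complex_of_real (fst x) - of_real (fst m))\<^sup>2 + (of_real (snd x) - of_real (snd m))\<^sup>2
             = of_real ((norm (x - m))\<^sup>2)"
    by (simp add: norm_sq_pair)
  define a0 where "a0 = norm (x - m0)"
  define a1 where "a1 = norm (x - m1)"
  define a2 where "a2 = norm (x - m2)"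
  define v0 where "v0 = m1 - m2"
  define v1 where "v1 = m2 - m0"
  define v2 where "v2 = m0 - m1"
  define W where "W = Wdet m0 m1 m2"
  define Q where "Q = a0\<^sup>2 * (norm v0)\<^sup>2 + a1\<^sup>2 * (norm v1)\<^sup>2 + a2\<^sup>2 * (norm v2)\<^sup>2 - W\<^sup>2"
  have nD: "\<And>a v. (norm (a *\<^sub>R (v::real\<times>real)))\<^sup>2 = a\<^sup>2 * (norm v)\<^sup>2"
    by (simp add: power_mult_distrib)
  have iD: "\<And>a b u v. (a *\<^sub>R (u::real\<times>real)) \<bullet> (b *\<^sub>R v) = a * b * (u \<bullet> v)"
    by simp
  have rhs: "bifF m0 m1 m2 x =
     Q^4 - 8 * Q\<^sup>2 * ((a0*a1*(v0\<bullet>v1))\<^sup>2 + (a1*a2*(v1\<bullet>v2))\<^sup>2 + (a2*a0*(v2\<bullet>v0))\<^sup>2)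
      + 64 * Q * (a0*a1*(v0\<bullet>v1)) * (a1*a2*(v1\<bullet>v2)) * (a2*a0*(v2\<bullet>v0))
      + 16 * ((a0*a1*(v0\<bullet>v1))^4 + (a1*a2*(v1\<bullet>v2))^4 + (a2*a0*(v2\<bullet>v0))^4)
      - 32 * ((a0*a1*(v0\<bullet>v1))\<^sup>2 * (a1*a2*(v1\<bullet>v2))\<^sup>2 + (a1*a2*(v1\<bullet>v2))\<^sup>2 * (a2*a0*(v2\<bullet>v0))\<^sup>2
              + (a2*a0*(v2\<bullet>v0))\<^sup>2 * (a0*a1*(v0\<bullet>v1))\<^sup>2)"
    unfolding bifF_def Let_def nD iD a0_def a1_def a2_def v0_def v1_def v2_def W_def Q_def ..
  have lhs: "bifFc m0 m1 m2 (of_real (fst x)) (of_real (snd x)) =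
     (let S01 = a0\<^sup>2 * a1\<^sup>2 * (v0 \<bullet> v1)\<^sup>2; S12 = a1\<^sup>2 * a2\<^sup>2 * (v1 \<bullet> v2)\<^sup>2;
          S20 = a2\<^sup>2 * a0\<^sup>2 * (v2 \<bullet> v0)\<^sup>2;
          PPP = a0\<^sup>2 * a1\<^sup>2 * a2\<^sup>2 * ((v0 \<bullet> v1) * (v1 \<bullet> v2) * (v2 \<bullet> v0))
      in complex_of_real (Q^4 - 8 * Q\<^sup>2 * (S01 + S12 + S20) + 64 * Q * PPP
        + 16 * (S01\<^sup>2 + S12\<^sup>2 + S20\<^sup>2) - 32 * (S01 * S12 + S12 * S20 + S20 * S01)))"
    unfolding bifFc_def Let_def sq a0_def a1_def a2_def v0_def v1_def v2_def W_def Q_def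
    by (simp only: of_real_add of_real_mult of_real_diff of_real_power of_real_numeral)
  show ?thesis
    unfolding lhs rhs Let_def
    by (simp only: of_real_eq_iff) algebra
qed

text \<open>Projective closure: embedding x = X/U, y = Y/U. Since F has degree 5, its
  homogenization is U^5 F(X/U, Y/U), extended to U = 0 by continuity.\<close>
definition bifFh :: "real \<times> real \<Rightarrow> real \<times> real \<Rightarrow> real \<times> real \<Rightarrow> complex \<Rightarrow> complex \<Rightarrow> complex \<Rightarrow> complex" where
  "bifFh m0 m1 m2 X Y U =
     (if U \<noteq> 0 then U ^ 5 * bifFc m0 m1 m2 (X / U) (Y / U)
      else Lim (at 0) (\<lambda>t. t ^ 5 * bifFc m0 m1 m2 (X / t) (Y / t)))"

definition is_ideal_point :: "real \<times> real \<Rightarrow> real \<times> real \<Rightarrow> real \<times> real \<Rightarrow> complex \<Rightarrow> complex \<Rightarrow> bool" where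
  "is_ideal_point m0 m1 m2 X Y \<longleftrightarrow> (X, Y) \<noteq> (0, 0) \<and>
     ((\<lambda>t. t ^ 5 * bifFc m0 m1 m2 (X / t) (Y / t)) \<longlongrightarrow> 0) (at 0)"

definition same_ideal :: "complex \<Rightarrow> complex \<Rightarrow> complex \<Rightarrow> complex \<Rightarrow> bool" where
  "same_ideal X Y a b \<longleftrightarrow> (\<exists>c. c \<noteq> 0 \<and> X = c * a \<and> Y = c * b)"

definition gradFh :: "real \<times> real \<Rightarrow> real \<times> real \<Rightarrow> real \<times> real \<Rightarrow> complex \<Rightarrow> complex \<Rightarrow> complex \<Rightarrow> complex \<times> complex \<times> complex" where
  "gradFh m0 m1 m2 X Y U =
     (deriv (\<lambda>s. bifFh m0 m1 m2 s Y U) X,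
      deriv (\<lambda>s. bifFh m0 m1 m2 X s U) Y,
      deriv (\<lambda>s. bifFh m0 m1 m2 X Y s) U)"

definition smooth_point :: "real \<times> real \<Rightarrow> real \<times> real \<Rightarrow> real \<times> real \<Rightarrow> complex \<Rightarrow> complex \<Rightarrow> complex \<Rightarrow> bool" where
  "smooth_point m0 m1 m2 X Y U \<longleftrightarrow> bifFh m0 m1 m2 X Y U = 0 \<and> gradFh m0 m1 m2 X Y U \<noteq> (0, 0, 0)"

definition tangent_affine :: "real \<times> real \<Rightarrow> real \<times> real \<Rightarrow> real \<times> real \<Rightarrow> complex \<Rightarrow> complex \<Rightarrow> complex \<Rightarrow> (real \<times> real) set" where
  "tangent_affine m0 m1 m2 X Y U =
     {p. (case gradFh m0 m1 m2 X Y U of (gX, gY, gU) \<Rightarrow>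
           gX * of_real (fst p) + gY * of_real (snd p) + gU = 0)}"

definition is_asymptote_at :: "real \<times> real \<Rightarrow> real \<times> real \<Rightarrow> real \<times> real \<Rightarrow> complex \<Rightarrow> complex \<Rightarrow> (real \<times> real) set \<Rightarrow> bool" where
  "is_asymptote_at m0 m1 m2 X Y L \<longleftrightarrow>
     is_ideal_point m0 m1 m2 X Y \<and> smooth_point m0 m1 m2 X Y 0 \<and> L = tangent_affine m0 m1 m2 X Y 0"

end

theory Submission
  imports Defs
begin

text \<open>Write \<open>x = m0 + \<alpha> e1 + \<beta> e2\<close> with \<open>e1 = m1 - m0\<close>, \<open>e2 = m2 - m0\<close>. The squared distances
  \<open>d_i(x)\<^sup>2\<close> are quadratic forms in \<open>(\<alpha>, \<beta>)\<close> built from the Gram matrix of \<open>e1, e2\<close>, and \<open>F\<close>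
  becomes \<open>W\<^sup>4\<close> times an explicit quintic in \<open>(\<alpha>, \<beta>)\<close> whose leading form is
  \<open>-64 \<parallel>e1 - e2\<parallel>\<^sup>2 \<parallel>e1\<parallel>\<^sup>2 \<parallel>e2\<parallel>\<^sup>2 \<alpha> \<beta> (\<alpha> + \<beta>) (x\<^sup>2 + y\<^sup>2)\<close>. It vanishes exactly in the directions
  \<open>\<alpha> + \<beta> = 0\<close>, \<open>\<alpha> = 0\<close>, \<open>\<beta> = 0\<close> (those of \<open>m1 - m2\<close>, \<open>m2 - m0\<close>, \<open>m0 - m1\<close>) and at the circular
  points. Evaluating the gradient of the homogenised quintic at the three real ideal points gives
  the asymptotes \<open>\<alpha> + \<beta> = 3/4\<close>, \<open>\<alpha> = 1/4\<close>, \<open>\<beta> = 1/4\<close>, which have no common point.\<close>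

text \<open>\<open>frame_form \<alpha> \<beta> u b c g\<close> is \<open>F / W\<^sup>4\<close> in the frame coordinates \<open>(\<alpha>, \<beta>)\<close>, homogenised by \<open>u\<close>;
  \<open>b = \<parallel>e2\<parallel>\<^sup>2\<close>, \<open>c = \<parallel>e1\<parallel>\<^sup>2\<close>, \<open>g = e1 \<bullet> e2\<close> are the Gram entries.\<close>

definition frame_form :: "complex \<Rightarrow> complex \<Rightarrow> complex \<Rightarrow> complex \<Rightarrow> complex \<Rightarrow> complex \<Rightarrow> complex" where
  "frame_form al be u b c g = (- 64*al^4*be*b^2*c^2 - 64*al^4*be*b*c^3 + 128*al^4*be*b*c^2*g
    + 16*al^4*u*b^2*c^2 + 16*al^4*u*b*c^3 - 32*al^4*u*b*c^2*g - 64*al^3*be^2*b^2*c^2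
    - 128*al^3*be^2*b^2*c*g - 64*al^3*be^2*b*c^3 + 256*al^3*be^2*b*c*g^2
    + 128*al^3*be*u*b^2*c^2 + 64*al^3*be*u*b^2*c*g + 64*al^3*be*u*b*c^3 - 64*al^3*be*u*b*c^2*g
    - 128*al^3*be*u*b*c*g^2 + 64*al^3*be*u*c^2*g^2 - 128*al^3*be*u*c*g^3 - 32*al^3*u^2*b^2*c^2
    - 16*al^3*u^2*b*c^3 + 32*al^3*u^2*b*c^2*g - 16*al^3*u^2*c^2*g^2 + 32*al^3*u^2*c*g^3
    - 64*al^2*be^3*b^3*c - 64*al^2*be^3*b^2*c^2 - 128*al^2*be^3*b*c^2*g + 256*al^2*be^3*b*c*g^2
    + 128*al^2*be^2*u*b^2*c^2 + 224*al^2*be^2*u*b^2*c*g + 64*al^2*be^2*u*b^2*g^2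
    + 224*al^2*be^2*u*b*c^2*g - 448*al^2*be^2*u*b*c*g^2 - 128*al^2*be^2*u*b*g^3
    + 64*al^2*be^2*u*c^2*g^2 - 128*al^2*be^2*u*c*g^3 - 112*al^2*be*u^2*b^2*c^2
    - 96*al^2*be*u^2*b^2*c*g - 96*al^2*be*u^2*b*c^2*g + 176*al^2*be*u^2*b*c*g^2
    - 64*al^2*be*u^2*c^2*g^2 + 128*al^2*be*u^2*c*g^3 + 64*al^2*be*u^2*g^4 + 24*al^2*u^3*b^2*c^2
    + 8*al^2*u^3*b*c^2*g - 8*al^2*u^3*b*c*g^2 + 16*al^2*u^3*c^2*g^2 - 40*al^2*u^3*c*g^3
    - 64*al*be^4*b^3*c - 64*al*be^4*b^2*c^2 + 128*al*be^4*b^2*c*g + 64*al*be^3*u*b^3*c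
    + 128*al*be^3*u*b^2*c^2 - 64*al*be^3*u*b^2*c*g + 64*al*be^3*u*b^2*g^2
    + 64*al*be^3*u*b*c^2*g - 128*al*be^3*u*b*c*g^2 - 128*al*be^3*u*b*g^3
    - 112*al*be^2*u^2*b^2*c^2 - 96*al*be^2*u^2*b^2*c*g - 64*al*be^2*u^2*b^2*g^2
    - 96*al*be^2*u^2*b*c^2*g + 176*al*be^2*u^2*b*c*g^2 + 128*al*be^2*u^2*b*g^3
    + 64*al*be^2*u^2*g^4 + 48*al*be*u^3*b^2*c^2 + 48*al*be*u^3*b^2*c*g + 48*al*be*u^3*b*c^2*g
    - 64*al*be*u^3*b*c*g^2 - 16*al*be*u^3*b*g^3 - 16*al*be*u^3*c*g^3 - 48*al*be*u^3*g^4
    - 8*al*u^4*b^2*c^2 - 8*al*u^4*b*c^2*g + 8*al*u^4*b*c*g^2 + 8*al*u^4*c*g^3 + 16*be^4*u*b^3*c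
    + 16*be^4*u*b^2*c^2 - 32*be^4*u*b^2*c*g - 16*be^3*u^2*b^3*c - 32*be^3*u^2*b^2*c^2
    + 32*be^3*u^2*b^2*c*g - 16*be^3*u^2*b^2*g^2 + 32*be^3*u^2*b*g^3 + 24*be^2*u^3*b^2*c^2
    + 8*be^2*u^3*b^2*c*g + 16*be^2*u^3*b^2*g^2 - 8*be^2*u^3*b*c*g^2 - 40*be^2*u^3*b*g^3
    - 8*be*u^4*b^2*c^2 - 8*be*u^4*b^2*c*g + 8*be*u^4*b*c*g^2 + 8*be*u^4*b*g^3 + u^5*b^2*c^2
    - 2*u^5*b*c*g^2 + u^5*g^4)"

definition frame_form_dA :: "complex \<Rightarrow> complex \<Rightarrow> complex \<Rightarrow> complex \<Rightarrow> complex \<Rightarrow> complex \<Rightarrow> complex" where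
  "frame_form_dA al be u b c g = (- 256*al^3*be*b^2*c^2 - 256*al^3*be*b*c^3
    + 512*al^3*be*b*c^2*g + 64*al^3*u*b^2*c^2 + 64*al^3*u*b*c^3 - 128*al^3*u*b*c^2*g
    - 192*al^2*be^2*b^2*c^2 - 384*al^2*be^2*b^2*c*g - 192*al^2*be^2*b*c^3
    + 768*al^2*be^2*b*c*g^2 + 384*al^2*be*u*b^2*c^2 + 192*al^2*be*u*b^2*c*g
    + 192*al^2*be*u*b*c^3 - 192*al^2*be*u*b*c^2*g - 384*al^2*be*u*b*c*g^2
    + 192*al^2*be*u*c^2*g^2 - 384*al^2*be*u*c*g^3 - 96*al^2*u^2*b^2*c^2 - 48*al^2*u^2*b*c^3
    + 96*al^2*u^2*b*c^2*g - 48*al^2*u^2*c^2*g^2 + 96*al^2*u^2*c*g^3 - 128*al*be^3*b^3*c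
    - 128*al*be^3*b^2*c^2 - 256*al*be^3*b*c^2*g + 512*al*be^3*b*c*g^2 + 256*al*be^2*u*b^2*c^2
    + 448*al*be^2*u*b^2*c*g + 128*al*be^2*u*b^2*g^2 + 448*al*be^2*u*b*c^2*g
    - 896*al*be^2*u*b*c*g^2 - 256*al*be^2*u*b*g^3 + 128*al*be^2*u*c^2*g^2 - 256*al*be^2*u*c*g^3
    - 224*al*be*u^2*b^2*c^2 - 192*al*be*u^2*b^2*c*g - 192*al*be*u^2*b*c^2*g
    + 352*al*be*u^2*b*c*g^2 - 128*al*be*u^2*c^2*g^2 + 256*al*be*u^2*c*g^3 + 128*al*be*u^2*g^4
    + 48*al*u^3*b^2*c^2 + 16*al*u^3*b*c^2*g - 16*al*u^3*b*c*g^2 + 32*al*u^3*c^2*g^2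
    - 80*al*u^3*c*g^3 - 64*be^4*b^3*c - 64*be^4*b^2*c^2 + 128*be^4*b^2*c*g + 64*be^3*u*b^3*c
    + 128*be^3*u*b^2*c^2 - 64*be^3*u*b^2*c*g + 64*be^3*u*b^2*g^2 + 64*be^3*u*b*c^2*g
    - 128*be^3*u*b*c*g^2 - 128*be^3*u*b*g^3 - 112*be^2*u^2*b^2*c^2 - 96*be^2*u^2*b^2*c*g
    - 64*be^2*u^2*b^2*g^2 - 96*be^2*u^2*b*c^2*g + 176*be^2*u^2*b*c*g^2 + 128*be^2*u^2*b*g^3
    + 64*be^2*u^2*g^4 + 48*be*u^3*b^2*c^2 + 48*be*u^3*b^2*c*g + 48*be*u^3*b*c^2*g
    - 64*be*u^3*b*c*g^2 - 16*be*u^3*b*g^3 - 16*be*u^3*c*g^3 - 48*be*u^3*g^4 - 8*u^4*b^2*c^2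
    - 8*u^4*b*c^2*g + 8*u^4*b*c*g^2 + 8*u^4*c*g^3)"

definition frame_form_dB :: "complex \<Rightarrow> complex \<Rightarrow> complex \<Rightarrow> complex \<Rightarrow> complex \<Rightarrow> complex \<Rightarrow> complex" where
  "frame_form_dB al be u b c g = (- 64*al^4*b^2*c^2 - 64*al^4*b*c^3 + 128*al^4*b*c^2*g
    - 128*al^3*be*b^2*c^2 - 256*al^3*be*b^2*c*g - 128*al^3*be*b*c^3 + 512*al^3*be*b*c*g^2
    + 128*al^3*u*b^2*c^2 + 64*al^3*u*b^2*c*g + 64*al^3*u*b*c^3 - 64*al^3*u*b*c^2*g
    - 128*al^3*u*b*c*g^2 + 64*al^3*u*c^2*g^2 - 128*al^3*u*c*g^3 - 192*al^2*be^2*b^3*c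
    - 192*al^2*be^2*b^2*c^2 - 384*al^2*be^2*b*c^2*g + 768*al^2*be^2*b*c*g^2
    + 256*al^2*be*u*b^2*c^2 + 448*al^2*be*u*b^2*c*g + 128*al^2*be*u*b^2*g^2
    + 448*al^2*be*u*b*c^2*g - 896*al^2*be*u*b*c*g^2 - 256*al^2*be*u*b*g^3
    + 128*al^2*be*u*c^2*g^2 - 256*al^2*be*u*c*g^3 - 112*al^2*u^2*b^2*c^2 - 96*al^2*u^2*b^2*c*g
    - 96*al^2*u^2*b*c^2*g + 176*al^2*u^2*b*c*g^2 - 64*al^2*u^2*c^2*g^2 + 128*al^2*u^2*c*g^3
    + 64*al^2*u^2*g^4 - 256*al*be^3*b^3*c - 256*al*be^3*b^2*c^2 + 512*al*be^3*b^2*c*g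
    + 192*al*be^2*u*b^3*c + 384*al*be^2*u*b^2*c^2 - 192*al*be^2*u*b^2*c*g
    + 192*al*be^2*u*b^2*g^2 + 192*al*be^2*u*b*c^2*g - 384*al*be^2*u*b*c*g^2
    - 384*al*be^2*u*b*g^3 - 224*al*be*u^2*b^2*c^2 - 192*al*be*u^2*b^2*c*g
    - 128*al*be*u^2*b^2*g^2 - 192*al*be*u^2*b*c^2*g + 352*al*be*u^2*b*c*g^2
    + 256*al*be*u^2*b*g^3 + 128*al*be*u^2*g^4 + 48*al*u^3*b^2*c^2 + 48*al*u^3*b^2*c*g
    + 48*al*u^3*b*c^2*g - 64*al*u^3*b*c*g^2 - 16*al*u^3*b*g^3 - 16*al*u^3*c*g^3 - 48*al*u^3*g^4
    + 64*be^3*u*b^3*c + 64*be^3*u*b^2*c^2 - 128*be^3*u*b^2*c*g - 48*be^2*u^2*b^3*c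
    - 96*be^2*u^2*b^2*c^2 + 96*be^2*u^2*b^2*c*g - 48*be^2*u^2*b^2*g^2 + 96*be^2*u^2*b*g^3
    + 48*be*u^3*b^2*c^2 + 16*be*u^3*b^2*c*g + 32*be*u^3*b^2*g^2 - 16*be*u^3*b*c*g^2
    - 80*be*u^3*b*g^3 - 8*u^4*b^2*c^2 - 8*u^4*b^2*c*g + 8*u^4*b*c*g^2 + 8*u^4*b*g^3)"

definition frame_form_dU :: "complex \<Rightarrow> complex \<Rightarrow> complex \<Rightarrow> complex \<Rightarrow> complex \<Rightarrow> complex \<Rightarrow> complex" where
  "frame_form_dU al be u b c g = (16*al^4*b^2*c^2 + 16*al^4*b*c^3 - 32*al^4*b*c^2*g
    + 128*al^3*be*b^2*c^2 + 64*al^3*be*b^2*c*g + 64*al^3*be*b*c^3 - 64*al^3*be*b*c^2*g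
    - 128*al^3*be*b*c*g^2 + 64*al^3*be*c^2*g^2 - 128*al^3*be*c*g^3 - 64*al^3*u*b^2*c^2
    - 32*al^3*u*b*c^3 + 64*al^3*u*b*c^2*g - 32*al^3*u*c^2*g^2 + 64*al^3*u*c*g^3
    + 128*al^2*be^2*b^2*c^2 + 224*al^2*be^2*b^2*c*g + 64*al^2*be^2*b^2*g^2
    + 224*al^2*be^2*b*c^2*g - 448*al^2*be^2*b*c*g^2 - 128*al^2*be^2*b*g^3
    + 64*al^2*be^2*c^2*g^2 - 128*al^2*be^2*c*g^3 - 224*al^2*be*u*b^2*c^2
    - 192*al^2*be*u*b^2*c*g - 192*al^2*be*u*b*c^2*g + 352*al^2*be*u*b*c*g^2
    - 128*al^2*be*u*c^2*g^2 + 256*al^2*be*u*c*g^3 + 128*al^2*be*u*g^4 + 72*al^2*u^2*b^2*c^2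
    + 24*al^2*u^2*b*c^2*g - 24*al^2*u^2*b*c*g^2 + 48*al^2*u^2*c^2*g^2 - 120*al^2*u^2*c*g^3
    + 64*al*be^3*b^3*c + 128*al*be^3*b^2*c^2 - 64*al*be^3*b^2*c*g + 64*al*be^3*b^2*g^2
    + 64*al*be^3*b*c^2*g - 128*al*be^3*b*c*g^2 - 128*al*be^3*b*g^3 - 224*al*be^2*u*b^2*c^2
    - 192*al*be^2*u*b^2*c*g - 128*al*be^2*u*b^2*g^2 - 192*al*be^2*u*b*c^2*g
    + 352*al*be^2*u*b*c*g^2 + 256*al*be^2*u*b*g^3 + 128*al*be^2*u*g^4 + 144*al*be*u^2*b^2*c^2
    + 144*al*be*u^2*b^2*c*g + 144*al*be*u^2*b*c^2*g - 192*al*be*u^2*b*c*g^2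
    - 48*al*be*u^2*b*g^3 - 48*al*be*u^2*c*g^3 - 144*al*be*u^2*g^4 - 32*al*u^3*b^2*c^2
    - 32*al*u^3*b*c^2*g + 32*al*u^3*b*c*g^2 + 32*al*u^3*c*g^3 + 16*be^4*b^3*c + 16*be^4*b^2*c^2
    - 32*be^4*b^2*c*g - 32*be^3*u*b^3*c - 64*be^3*u*b^2*c^2 + 64*be^3*u*b^2*c*g
    - 32*be^3*u*b^2*g^2 + 64*be^3*u*b*g^3 + 72*be^2*u^2*b^2*c^2 + 24*be^2*u^2*b^2*c*g
    + 48*be^2*u^2*b^2*g^2 - 24*be^2*u^2*b*c*g^2 - 120*be^2*u^2*b*g^3 - 32*be*u^3*b^2*c^2
    - 32*be*u^3*b^2*c*g + 32*be*u^3*b*c*g^2 + 32*be*u^3*b*g^3 + 5*u^4*b^2*c^2 - 10*u^4*b*c*g^2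
    + 5*u^4*g^4)"

lemma frame_form_homogeneous: "frame_form (t * A) (t * B) t b c g = t ^ 5 * frame_form A B 1 b c g"
  unfolding frame_form_def power_one mult_1_right by algebra

lemma frame_form_at_infinity:
  "frame_form A B 0 b c g = -64 * (b + c - 2*g) * b * c * A * B * (A + B) * (c*A^2 + 2*g*A*B + b*B^2)"
  unfolding frame_form_def by (simp; algebra)

lemma has_field_derivative_frame_form:
  assumes "(A has_field_derivative a) (at t)" "(B has_field_derivative b') (at t)"
    "(U has_field_derivative u) (at t)"
  shows "((\<lambda>s. frame_form (A s) (B s) (U s) b c g) has_field_derivative
      a * frame_form_dA (A t) (B t) (U t) b c g + b' * frame_form_dB (A t) (B t) (U t) b c g
      + u * frame_form_dU (A t) (B t) (U t) b c g) (at t)"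
  unfolding frame_form_def
  apply (rule derivative_eq_intros assms refl | assumption)+
  unfolding frame_form_dA_def frame_form_dB_def frame_form_dU_def
  by simp algebra

lemma frame_form_partials_at_1_m1:
  "frame_form_dA 1 (-1) 0 b c g = 64 * (b + c - 2*g)^2 * b * c"
  "frame_form_dB 1 (-1) 0 b c g = 64 * (b + c - 2*g)^2 * b * c"
  "frame_form_dU 1 (-1) 0 b c g = -48 * (b + c - 2*g)^2 * b * c"
  unfolding frame_form_dA_def frame_form_dB_def frame_form_dU_def by (simp; algebra)+

lemma frame_form_partials_at_0_1:
  "frame_form_dA 0 1 0 b c g = -64 * (b + c - 2*g) * b^2 * c"
  "frame_form_dB 0 1 0 b c g = 0"
  "frame_form_dU 0 1 0 b c g = 16 * (b + c - 2*g) * b^2 * c"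
  unfolding frame_form_dA_def frame_form_dB_def frame_form_dU_def by (simp; algebra)+

lemma frame_form_partials_at_m1_0:
  "frame_form_dA (-1) 0 0 b c g = 0"
  "frame_form_dB (-1) 0 0 b c g = -64 * (b + c - 2*g) * b * c^2"
  "frame_form_dU (-1) 0 0 b c g = 16 * (b + c - 2*g) * b * c^2"
  unfolding frame_form_dA_def frame_form_dB_def frame_form_dU_def by (simp; algebra)+

text \<open>\<open>s0, s1, s2\<close> are the squared distances from the point with frame coordinates \<open>(al, be)\<close> to
  \<open>m0, m1, m2\<close>; \<open>Q\<close>, \<open>S01\<close>, ..., \<open>PPP\<close> are the corresponding ingredients of \<open>bifFc\<close>.\<close>
lemma bif_polynomial_in_frame:
  fixes al be b c g :: complex
  defines "s0 \<equiv> c * al^2 + 2 * g * al * be + b * be^2"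
    and "s1 \<equiv> c * (al - 1)^2 + 2 * g * (al - 1) * be + b * be^2"
    and "s2 \<equiv> c * al^2 + 2 * g * al * (be - 1) + b * (be - 1)^2"
  assumes "Q = s0 * (b + c - 2*g) + s1 * b + s2 * c - (b * c - g^2)"
    "S01 = s0 * s1 * (g - b)^2" "S12 = s1 * s2 * (- g)^2" "S20 = s2 * s0 * (g - c)^2"
    "PPP = s0 * s1 * s2 * ((g - b) * (- g) * (g - c))"
  shows "Q^4 - 8 * Q^2 * (S01 + S12 + S20) + 64 * Q * PPP + 16 * (S01^2 + S12^2 + S20^2)
      - 32 * (S01 * S12 + S12 * S20 + S20 * S01) = (b * c - g^2)^2 * frame_form al be 1 b c g"
  unfolding assms frame_form_def power_one mult_1_right by algebra

lemma decompose_in_basis: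
  fixes a b c d X Y :: complex
  assumes "a * d - b * c \<noteq> 0"
  shows "X = (d * X - c * Y) / (a * d - b * c) * a + (a * Y - b * X) / (a * d - b * c) * c"
    and "Y = (d * X - c * Y) / (a * d - b * c) * b + (a * Y - b * X) / (a * d - b * c) * d"
proof -
  have "(d * X - c * Y) * a + (a * Y - b * X) * c = X * (a * d - b * c)"
    and "(d * X - c * Y) * b + (a * Y - b * X) * d = Y * (a * d - b * c)" by algebra+
  with assms show "X = (d * X - c * Y) / (a * d - b * c) * a + (a * Y - b * X) / (a * d - b * c) * c"
    and "Y = (d * X - c * Y) / (a * d - b * c) * b + (a * Y - b * X) / (a * d - b * c) * d"
    by (simp_all add: divide_simps)
qed

lemma has_field_derivative_affine: "((\<lambda>s. C + s * D) has_field_derivative (D::complex)) (at t)"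
  by (auto intro!: derivative_eq_intros)

lemma same_ideal_iff_cross:
  assumes "(u, v) \<noteq> (0::complex, 0)"
  shows "same_ideal X Y u v \<longleftrightarrow> (X, Y) \<noteq> (0, 0) \<and> X * v = Y * u"
proof
  assume "same_ideal X Y u v"
  then obtain k where "k \<noteq> 0" "X = k * u" "Y = k * v" unfolding same_ideal_def by blast
  then show "(X, Y) \<noteq> (0, 0) \<and> X * v = Y * u" using assms by auto
next
  assume h: "(X, Y) \<noteq> (0, 0) \<and> X * v = Y * u"
  show "same_ideal X Y u v"
  proof (cases "u = 0")
    case True
    with assms h have "v \<noteq> 0" "X = 0" "Y \<noteq> 0" by auto
    then show ?thesis unfolding same_ideal_def
      by (intro exI[of _ "Y / v"]) (use True in auto)
  next
    case False
    with h have "Y = X / u * v" "X \<noteq> 0" by (auto simp: field_simps)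
    then show ?thesis unfolding same_ideal_def
      by (intro exI[of _ "X / u"]) (use False in auto)
  qed
qed

lemma same_ideal_refl: "same_ideal X Y X Y"
  unfolding same_ideal_def by (intro exI[of _ 1]) simp

lemma sum_squares_eq_0_iff_isotropic:
  fixes X Y :: complex
  shows "X^2 + Y^2 = 0 \<longleftrightarrow> X * \<i> = Y * 1 \<or> X * (- \<i>) = Y * 1"
proof -
  have "X^2 + Y^2 = (Y - X * \<i>) * (Y + X * \<i>)" by (simp add: algebra_simps power2_eq_square)
  then have "X^2 + Y^2 = 0 \<longleftrightarrow> Y - X * \<i> = 0 \<or> Y + X * \<i> = 0" by simp
  then show ?thesis by (auto simp: add_eq_0_iff2)
qed

lemma bifFh_at_ideal_point:
  assumes "is_ideal_point m0 m1 m2 X Y"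
  shows "bifFh m0 m1 m2 X Y 0 = 0"
  using assms unfolding is_ideal_point_def bifFh_def by (simp add: tendsto_Lim)

lemma is_asymptote_atI:
  assumes "is_ideal_point m0 m1 m2 X Y" "tangent_affine m0 m1 m2 X Y 0 = L" "L \<noteq> UNIV"
  shows "is_asymptote_at m0 m1 m2 X Y L"
proof -
  txt \<open>A vanishing gradient would make every affine point lie on the tangent.\<close>
  have "gradFh m0 m1 m2 X Y 0 \<noteq> (0, 0, 0)"
    using assms(2,3) unfolding tangent_affine_def by auto
  with assms show ?thesis
    unfolding is_asymptote_at_def smooth_point_def by (simp add: bifFh_at_ideal_point)
qed

locale noncollinear_triple =
  fixes m0 m1 m2 :: "real \<times> real"
  assumes noncollinear: "Wdet m0 m1 m2 \<noteq> 0"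
begin

abbreviation W :: real where "W \<equiv> Wdet m0 m1 m2"

definition e1 :: "real \<times> real" where "e1 = m1 - m0"
definition e2 :: "real \<times> real" where "e2 = m2 - m0"

lemma W_eq_wedge: "W = wedge e1 e2"
  unfolding Wdet_def e1_def e2_def ..

lemma edges_nonzero: "e1 \<noteq> 0" "e2 \<noteq> 0" "e1 - e2 \<noteq> 0"
  using noncollinear unfolding W_eq_wedge wedge_def by (auto simp: algebra_simps)

definition alpha :: "real \<times> real \<Rightarrow> real" where "alpha x = wedge (x - m0) e2 / W"
definition beta :: "real \<times> real \<Rightarrow> real" where "beta x = wedge e1 (x - m0) / W"

lemma wedge_edges_in_frame:
  "4 * wedge (m1 - m2) (x - m0) - 3 * W = W * (4 * (alpha x + beta x) - 3)"
  "4 * wedge (m2 - m0) (x - m1) - 3 * W = W * (1 - 4 * alpha x)"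
  "4 * wedge (m0 - m1) (x - m2) - 3 * W = W * (1 - 4 * beta x)"
proof -
  have "W * alpha x = wedge (x - m0) e2" "W * beta x = wedge e1 (x - m0)"
    using noncollinear by (simp_all add: alpha_def beta_def)
  moreover have "wedge (m1 - m2) (x - m0) = wedge (x - m0) e2 + wedge e1 (x - m0)"
    "wedge (m2 - m0) (x - m1) = W - wedge (x - m0) e2"
    "wedge (m0 - m1) (x - m2) = W - wedge e1 (x - m0)"
    unfolding W_eq_wedge wedge_def e1_def e2_def by (simp_all add: algebra_simps)
  ultimately show "4 * wedge (m1 - m2) (x - m0) - 3 * W = W * (4 * (alpha x + beta x) - 3)"
    "4 * wedge (m2 - m0) (x - m1) - 3 * W = W * (1 - 4 * alpha x)"
    "4 * wedge (m0 - m1) (x - m2) - 3 * W = W * (1 - 4 * beta x)"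
    by (simp_all add: algebra_simps)
qed

definition gram11 :: complex where "gram11 = of_real (e1 \<bullet> e1)"
definition gram22 :: complex where "gram22 = of_real (e2 \<bullet> e2)"
definition gram12 :: complex where "gram12 = of_real (e1 \<bullet> e2)"

lemma gram_det: "gram22 * gram11 - gram12^2 = of_real (W^2)"
proof -
  have "(e2 \<bullet> e2) * (e1 \<bullet> e1) - (e1 \<bullet> e2)^2 = W^2"
    unfolding W_eq_wedge wedge_def inner_prod_def by (simp add: power2_eq_square algebra_simps)
  then show ?thesis unfolding gram11_def gram22_def gram12_def by (metis of_real_diff of_real_mult of_real_power)
qed

lemma gram_diff: "gram22 + gram11 - 2 * gram12 = of_real ((e1 - e2) \<bullet> (e1 - e2))"
  unfolding gram11_def gram22_def gram12_def by (simp add: inner_diff inner_commute)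

lemma gram_nonzero: "gram11 \<noteq> 0" "gram22 \<noteq> 0" "gram22 + gram11 - 2 * gram12 \<noteq> 0"
proof -
  show "gram11 \<noteq> 0" "gram22 \<noteq> 0"
    using edges_nonzero by (simp_all add: gram11_def gram22_def)
  show "gram22 + gram11 - 2 * gram12 \<noteq> 0"
    using edges_nonzero(3) unfolding gram_diff by simp
qed

text \<open>\<open>(X : Y : U) \<mapsto> (hcoord1 X Y U : hcoord2 X Y U : U)\<close> is the projective change to the
  coordinates of the frame \<open>(m0; e1, e2)\<close>.\<close>
definition hcoord1 :: "complex \<Rightarrow> complex \<Rightarrow> complex \<Rightarrow> complex" where
  "hcoord1 X Y U =
     (of_real (snd e2) * X - of_real (fst e2) * Y - of_real (wedge m0 e2) * U) / of_real W"
definition hcoord2 :: "complex \<Rightarrow> complex \<Rightarrow> complex \<Rightarrow> complex" where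
  "hcoord2 X Y U =
     (of_real (fst e1) * Y - of_real (snd e1) * X - of_real (wedge e1 m0) * U) / of_real W"

lemma hcoord_of_real:
  "hcoord1 (of_real (fst x)) (of_real (snd x)) (of_real u) = of_real (wedge (x - u *\<^sub>R m0) e2 / W)"
  "hcoord2 (of_real (fst x)) (of_real (snd x)) (of_real u) = of_real (wedge e1 (x - u *\<^sub>R m0) / W)"
  unfolding hcoord1_def hcoord2_def wedge_def by (simp_all add: algebra_simps)

lemma hcoord_line:
  "hcoord1 (X + s * dX) (Y + s * dY) (U + s * dU) = hcoord1 X Y U + s * hcoord1 dX dY dU"
  "hcoord2 (X + s * dX) (Y + s * dY) (U + s * dU) = hcoord2 X Y U + s * hcoord2 dX dY dU"
  using noncollinear unfolding hcoord1_def hcoord2_def by (simp_all add: field_simps)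

lemma hcoord_scale:
  "t \<noteq> 0 \<Longrightarrow> hcoord1 (X / t) (Y / t) 1 = hcoord1 X Y t / t"
  "t \<noteq> 0 \<Longrightarrow> hcoord2 (X / t) (Y / t) 1 = hcoord2 X Y t / t"
  using noncollinear unfolding hcoord1_def hcoord2_def by (simp_all add: field_simps)

lemma hcoord_decomposition:
  "X - U * of_real (fst m0) = hcoord1 X Y U * of_real (fst e1) + hcoord2 X Y U * of_real (fst e2)"
  "Y - U * of_real (snd m0) = hcoord1 X Y U * of_real (snd e1) + hcoord2 X Y U * of_real (snd e2)"
proof -
  have W: "complex_of_real W = of_real (fst e1) * of_real (snd e2) - of_real (snd e1) * of_real (fst e2)"
    unfolding W_eq_wedge wedge_def by simp
  have "hcoord1 X Y U = (of_real (snd e2) * (X - U * of_real (fst m0))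
      - of_real (fst e2) * (Y - U * of_real (snd m0))) / of_real W"
    "hcoord2 X Y U = (of_real (fst e1) * (Y - U * of_real (snd m0))
      - of_real (snd e1) * (X - U * of_real (fst m0))) / of_real W"
    unfolding hcoord1_def hcoord2_def wedge_def by (simp_all add: algebra_simps)
  then show "X - U * of_real (fst m0) = hcoord1 X Y U * of_real (fst e1) + hcoord2 X Y U * of_real (fst e2)"
    "Y - U * of_real (snd m0) = hcoord1 X Y U * of_real (snd e1) + hcoord2 X Y U * of_real (snd e2)"
    unfolding W using decompose_in_basis noncollinear W by (metis of_real_eq_0_iff)+
qed

lemma sq_dist_in_frame:
  fixes A B :: complex
  assumes "X' = A * of_real (fst e1) + B * of_real (fst e2)"
    "Y' = A * of_real (snd e1) + B * of_real (snd e2)"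
  shows "X'^2 + Y'^2 = gram11 * A^2 + 2 * gram12 * A * B + gram22 * B^2"
  unfolding assms gram11_def gram12_def gram22_def inner_prod_def
  by (simp add: power2_eq_square algebra_simps)

lemma edge_vectors: "m1 - m2 = e1 - e2" "m2 - m0 = e2" "m0 - m1 = - e1"
  unfolding e1_def e2_def by simp_all

lemma bifFc_in_frame:
  "bifFc m0 m1 m2 z w =
     of_real (W^4) * frame_form (hcoord1 z w 1) (hcoord2 z w 1) 1 gram22 gram11 gram12"
proof -
  define A B where "A = hcoord1 z w 1" and "B = hcoord2 z w 1"
  have m: "fst m1 = fst m0 + fst e1" "snd m1 = snd m0 + snd e1"
    "fst m2 = fst m0 + fst e2" "snd m2 = snd m0 + snd e2"
    unfolding e1_def e2_def by simp_all
  have dec: "z - of_real (fst m0) = A * of_real (fst e1) + B * of_real (fst e2)"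
    "w - of_real (snd m0) = A * of_real (snd e1) + B * of_real (snd e2)"
    using hcoord_decomposition[where X = z and Y = w and U = 1] unfolding A_def B_def by simp_all
  have s0: "(z - of_real (fst m0))\<^sup>2 + (w - of_real (snd m0))\<^sup>2
      = gram11 * A^2 + 2 * gram12 * A * B + gram22 * B^2"
    by (rule sq_dist_in_frame[OF dec])
  have "z - of_real (fst m1) = (z - of_real (fst m0)) - of_real (fst e1)"
    "w - of_real (snd m1) = (w - of_real (snd m0)) - of_real (snd e1)"
    "z - of_real (fst m2) = (z - of_real (fst m0)) - of_real (fst e2)"
    "w - of_real (snd m2) = (w - of_real (snd m0)) - of_real (snd e2)"
    by (simp_all add: m)
  then have dec1: "z - of_real (fst m1) = (A - 1) * of_real (fst e1) + B * of_real (fst e2)"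
    "w - of_real (snd m1) = (A - 1) * of_real (snd e1) + B * of_real (snd e2)"
   and dec2: "z - of_real (fst m2) = A * of_real (fst e1) + (B - 1) * of_real (fst e2)"
    "w - of_real (snd m2) = A * of_real (snd e1) + (B - 1) * of_real (snd e2)"
    unfolding dec by (simp_all add: algebra_simps)
  have s1: "(z - of_real (fst m1))\<^sup>2 + (w - of_real (snd m1))\<^sup>2
      = gram11 * (A - 1)^2 + 2 * gram12 * (A - 1) * B + gram22 * B^2"
    by (rule sq_dist_in_frame[OF dec1])
  have s2: "(z - of_real (fst m2))\<^sup>2 + (w - of_real (snd m2))\<^sup>2
      = gram11 * A^2 + 2 * gram12 * A * (B - 1) + gram22 * (B - 1)^2"
    by (rule sq_dist_in_frame[OF dec2])
  have norms: "complex_of_real ((norm (m1 - m2))\<^sup>2) = gram22 + gram11 - 2 * gram12"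
    "complex_of_real ((norm (m2 - m0))\<^sup>2) = gram22"
    "complex_of_real ((norm (m0 - m1))\<^sup>2) = gram11"
    unfolding edge_vectors power2_norm_eq_inner gram_diff by (simp_all add: gram11_def gram22_def)
  have inners: "complex_of_real (((m1 - m2) \<bullet> (m2 - m0))\<^sup>2) = (gram12 - gram22)^2"
    "complex_of_real (((m2 - m0) \<bullet> (m0 - m1))\<^sup>2) = (- gram12)^2"
    "complex_of_real (((m0 - m1) \<bullet> (m1 - m2))\<^sup>2) = (gram12 - gram11)^2"
    "complex_of_real ((m1 - m2) \<bullet> (m2 - m0) * ((m2 - m0) \<bullet> (m0 - m1)) * ((m0 - m1) \<bullet> (m1 - m2)))
      = (gram12 - gram22) * (- gram12) * (gram12 - gram11)"
    unfolding edge_vectors gram11_def gram12_def gram22_def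
    by (simp_all add: inner_diff inner_commute)
  have W2: "(complex_of_real W)^2 = gram22 * gram11 - gram12^2"
    using gram_det by simp
  have W4: "complex_of_real (W^4) = (gram22 * gram11 - gram12^2)^2"
    unfolding W2[symmetric] by simp
  show ?thesis
    unfolding bifFc_def Let_def W4 A_def[symmetric] B_def[symmetric]
    by (rule bif_polynomial_in_frame) (simp_all only: s0 s1 s2 norms inners W2)
qed

definition Fh :: "complex \<Rightarrow> complex \<Rightarrow> complex \<Rightarrow> complex" where
  "Fh X Y U = of_real (W^4) * frame_form (hcoord1 X Y U) (hcoord2 X Y U) U gram22 gram11 gram12"

definition Fh_directional :: "complex \<Rightarrow> complex \<Rightarrow> complex \<Rightarrow> complex \<Rightarrow> complex \<Rightarrow> complex \<Rightarrow> complex" where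
  "Fh_directional X Y U dX dY dU = of_real (W^4) *
     (hcoord1 dX dY dU * frame_form_dA (hcoord1 X Y U) (hcoord2 X Y U) U gram22 gram11 gram12
      + hcoord2 dX dY dU * frame_form_dB (hcoord1 X Y U) (hcoord2 X Y U) U gram22 gram11 gram12
      + dU * frame_form_dU (hcoord1 X Y U) (hcoord2 X Y U) U gram22 gram11 gram12)"

lemma bifFc_homogenized:
  assumes "t \<noteq> 0"
  shows "t ^ 5 * bifFc m0 m1 m2 (X / t) (Y / t) = Fh X Y t"
proof -
  have "frame_form (hcoord1 X Y t) (hcoord2 X Y t) t gram22 gram11 gram12
      = t ^ 5 * frame_form (hcoord1 X Y t / t) (hcoord2 X Y t / t) 1 gram22 gram11 gram12"
    using frame_form_homogeneous[of t "hcoord1 X Y t / t" "hcoord2 X Y t / t"] assms by simp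
  then show ?thesis
    unfolding bifFc_in_frame Fh_def hcoord_scale[OF assms] by (simp only: mult.left_commute)
qed

lemma has_field_derivative_Fh_line:
  "((\<lambda>s. Fh (X + s * dX) (Y + s * dY) (U + s * dU)) has_field_derivative
     Fh_directional (X + t * dX) (Y + t * dY) (U + t * dU) dX dY dU) (at t)"
  unfolding Fh_def Fh_directional_def hcoord_line
  by (intro DERIV_cmult has_field_derivative_frame_form has_field_derivative_affine)

lemma tendsto_homogenized_bifFc:
  "((\<lambda>t. t ^ 5 * bifFc m0 m1 m2 (X / t) (Y / t)) \<longlongrightarrow> Fh X Y 0) (at 0)"
proof -
  have "isCont (\<lambda>s. Fh (X + s * 0) (Y + s * 0) (0 + s * 1)) 0"
    by (rule DERIV_isCont[OF has_field_derivative_Fh_line])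
  then have "((\<lambda>t. Fh X Y t) \<longlongrightarrow> Fh X Y 0) (at 0)"
    by (simp add: isCont_def)
  moreover have "\<forall>\<^sub>F t in at 0. Fh X Y t = t ^ 5 * bifFc m0 m1 m2 (X / t) (Y / t)"
    by (auto simp: eventually_at_filter bifFc_homogenized)
  ultimately show ?thesis by (rule Lim_transform_eventually)
qed

lemma bifFh_eq_Fh: "bifFh m0 m1 m2 X Y U = Fh X Y U"
  unfolding bifFh_def using tendsto_Lim[OF _ tendsto_homogenized_bifFc] bifFc_homogenized by simp

lemma is_ideal_point_iff_Fh: "is_ideal_point m0 m1 m2 X Y \<longleftrightarrow> (X, Y) \<noteq> (0, 0) \<and> Fh X Y 0 = 0"
proof -
  have "((\<lambda>t. t ^ 5 * bifFc m0 m1 m2 (X / t) (Y / t)) \<longlongrightarrow> 0) (at 0) \<longleftrightarrow> Fh X Y 0 = 0"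
    using tendsto_unique[OF _ tendsto_homogenized_bifFc] tendsto_homogenized_bifFc[of X Y]
    by (metis at_neq_bot)
  then show ?thesis unfolding is_ideal_point_def by simp
qed

lemma Fh_at_infinity:
  "Fh X Y 0 = of_real (W^4) * (-64 * (gram22 + gram11 - 2 * gram12) * gram22 * gram11)
     * (hcoord1 X Y 0 * hcoord2 X Y 0 * (hcoord1 X Y 0 + hcoord2 X Y 0) * (X^2 + Y^2))"
proof -
  have "X^2 + Y^2 = gram11 * (hcoord1 X Y 0)^2 + 2 * gram12 * hcoord1 X Y 0 * hcoord2 X Y 0
      + gram22 * (hcoord2 X Y 0)^2"
    by (rule sq_dist_in_frame) (use hcoord_decomposition[where U = 0] in simp_all)
  then show ?thesis unfolding Fh_def frame_form_at_infinity by (simp only: mult.assoc)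
qed

lemma hcoord_at_infinity_eq_0_iff:
  "hcoord1 X Y 0 = 0 \<longleftrightarrow> X * of_real (snd e2) = Y * of_real (fst e2)"
  "hcoord2 X Y 0 = 0 \<longleftrightarrow> X * of_real (- snd e1) = Y * of_real (- fst e1)"
  "hcoord1 X Y 0 + hcoord2 X Y 0 = 0 \<longleftrightarrow> X * of_real (snd e1 - snd e2) = Y * of_real (fst e1 - fst e2)"
  using noncollinear unfolding hcoord1_def hcoord2_def
  by (auto simp: add_divide_distrib[symmetric] algebra_simps)

lemma ideal_points:
  "is_ideal_point m0 m1 m2 X Y \<longleftrightarrow>
     same_ideal X Y (of_real (fst m1 - fst m2)) (of_real (snd m1 - snd m2)) \<or>
     same_ideal X Y (of_real (fst m2 - fst m0)) (of_real (snd m2 - snd m0)) \<or>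
     same_ideal X Y (of_real (fst m0 - fst m1)) (of_real (snd m0 - snd m1)) \<or>
     same_ideal X Y 1 \<i> \<or> same_ideal X Y 1 (- \<i>)"
proof -
  have dirs: "fst m1 - fst m2 = fst e1 - fst e2" "snd m1 - snd m2 = snd e1 - snd e2"
    "fst m2 - fst m0 = fst e2" "snd m2 - snd m0 = snd e2"
    "fst m0 - fst m1 = - fst e1" "snd m0 - snd m1 = - snd e1"
    unfolding e1_def e2_def by simp_all
  have nonzero: "(complex_of_real (fst e1 - fst e2), complex_of_real (snd e1 - snd e2)) \<noteq> (0, 0)"
    "(complex_of_real (fst e2), complex_of_real (snd e2)) \<noteq> (0, 0)"
    "(complex_of_real (- fst e1), complex_of_real (- snd e1)) \<noteq> (0, 0)"
    "(1::complex, \<i>) \<noteq> (0, 0)" "(1::complex, - \<i>) \<noteq> (0, 0)"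
    using edges_nonzero by (auto simp: prod_eq_iff)
  have "complex_of_real (W^4) \<noteq> 0" using noncollinear by simp
  then have "complex_of_real (W^4) * (-64 * (gram22 + gram11 - 2 * gram12) * gram22 * gram11) \<noteq> 0"
    using gram_nonzero by (simp only: mult_eq_0_iff) simp
  then show ?thesis
    unfolding dirs same_ideal_iff_cross[OF nonzero(1)] same_ideal_iff_cross[OF nonzero(2)]
      same_ideal_iff_cross[OF nonzero(3)] same_ideal_iff_cross[OF nonzero(4)]
      same_ideal_iff_cross[OF nonzero(5)] is_ideal_point_iff_Fh Fh_at_infinity
    by (auto simp only: mult_eq_0_iff hcoord_at_infinity_eq_0_iff sum_squares_eq_0_iff_isotropic)
qed

lemma gradFh_eq_Fh_directional:
  "gradFh m0 m1 m2 X Y U = (Fh_directional X Y U 1 0 0, Fh_directional X Y U 0 1 0, Fh_directional X Y U 0 0 1)"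
proof -
  have "(\<lambda>s. bifFh m0 m1 m2 s Y U) = (\<lambda>s. Fh (0 + s * 1) (Y + s * 0) (U + s * 0))"
    "(\<lambda>s. bifFh m0 m1 m2 X s U) = (\<lambda>s. Fh (X + s * 0) (0 + s * 1) (U + s * 0))"
    "(\<lambda>s. bifFh m0 m1 m2 X Y s) = (\<lambda>s. Fh (X + s * 0) (Y + s * 0) (0 + s * 1))"
    by (simp_all add: bifFh_eq_Fh)
  moreover have "deriv (\<lambda>s. Fh (0 + s * 1) (Y + s * 0) (U + s * 0)) X = Fh_directional X Y U 1 0 0"
    "deriv (\<lambda>s. Fh (X + s * 0) (0 + s * 1) (U + s * 0)) Y = Fh_directional X Y U 0 1 0"
    "deriv (\<lambda>s. Fh (X + s * 0) (Y + s * 0) (0 + s * 1)) U = Fh_directional X Y U 0 0 1"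
    using DERIV_imp_deriv[OF has_field_derivative_Fh_line, of 0 1 Y 0 U 0 X]
      DERIV_imp_deriv[OF has_field_derivative_Fh_line, of X 0 0 1 U 0 Y]
      DERIV_imp_deriv[OF has_field_derivative_Fh_line, of X 0 Y 0 0 1 U]
    by simp_all
  ultimately show ?thesis
    unfolding gradFh_def by simp
qed

lemma hcoord_expand:
  "hcoord1 x y u = x * hcoord1 1 0 0 + y * hcoord1 0 1 0 + u * hcoord1 0 0 1"
  "hcoord2 x y u = x * hcoord2 1 0 0 + y * hcoord2 0 1 0 + u * hcoord2 0 0 1"
  using noncollinear unfolding hcoord1_def hcoord2_def by (simp_all add: field_simps)

lemma Fh_directional_linear:
  "Fh_directional X Y U dX dY dU = dX * Fh_directional X Y U 1 0 0
     + dY * Fh_directional X Y U 0 1 0 + dU * Fh_directional X Y U 0 0 1"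
proof -
  have "hcoord1 dX dY dU = dX * hcoord1 1 0 0 + dY * hcoord1 0 1 0 + dU * hcoord1 0 0 1"
    "hcoord2 dX dY dU = dX * hcoord2 1 0 0 + dY * hcoord2 0 1 0 + dU * hcoord2 0 0 1"
    by (rule hcoord_expand)+
  then show ?thesis unfolding Fh_directional_def by (simp add: algebra_simps)
qed

lemma hcoord_affine_point:
  "hcoord1 (of_real (fst p)) (of_real (snd p)) 1 = of_real (alpha p)"
  "hcoord2 (of_real (fst p)) (of_real (snd p)) 1 = of_real (beta p)"
  using hcoord_of_real[where x = p and u = 1] by (simp_all add: alpha_def beta_def)

lemma tangent_affine_at_infinity:
  "tangent_affine m0 m1 m2 X Y 0 =
     {p. of_real (W^4) *
       (of_real (alpha p) * frame_form_dA (hcoord1 X Y 0) (hcoord2 X Y 0) 0 gram22 gram11 gram12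
        + of_real (beta p) * frame_form_dB (hcoord1 X Y 0) (hcoord2 X Y 0) 0 gram22 gram11 gram12
        + frame_form_dU (hcoord1 X Y 0) (hcoord2 X Y 0) 0 gram22 gram11 gram12) = 0}"
proof -
  have "Fh_directional X Y 0 (of_real (fst p)) (of_real (snd p)) 1
      = Fh_directional X Y 0 1 0 0 * of_real (fst p) + Fh_directional X Y 0 0 1 0 * of_real (snd p) + Fh_directional X Y 0 0 0 1" for p
    using Fh_directional_linear[of X Y 0 "of_real (fst p)" "of_real (snd p)" 1] by (simp add: ac_simps)
  then have "tangent_affine m0 m1 m2 X Y 0
      = {p. Fh_directional X Y 0 (of_real (fst p)) (of_real (snd p)) 1 = 0}"
    unfolding tangent_affine_def gradFh_eq_Fh_directional by simp
  then show ?thesis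
    unfolding Fh_directional_def hcoord_affine_point by simp
qed

lemma is_asymptote_at_frame_line:
  assumes "is_ideal_point m0 m1 m2 X Y"
    and "frame_form_dA (hcoord1 X Y 0) (hcoord2 X Y 0) 0 gram22 gram11 gram12 = k * of_real a"
    and "frame_form_dB (hcoord1 X Y 0) (hcoord2 X Y 0) 0 gram22 gram11 gram12 = k * of_real b"
    and "frame_form_dU (hcoord1 X Y 0) (hcoord2 X Y 0) 0 gram22 gram11 gram12 = k * of_real c"
    and "k \<noteq> 0" "c \<noteq> 0"
  shows "is_asymptote_at m0 m1 m2 X Y {x. W * (a * alpha x + b * beta x + c) = 0}"
proof (rule is_asymptote_atI[OF assms(1)])
  have "of_real (W^4) * (of_real (alpha p) * (k * of_real a) + of_real (beta p) * (k * of_real b)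
      + k * of_real c) = 0 \<longleftrightarrow> W * (a * alpha p + b * beta p + c) = 0" for p
  proof -
    have e: "of_real (W^4) * (of_real (alpha p) * (k * of_real a) + of_real (beta p) * (k * of_real b)
        + k * of_real c) = of_real (W^4) * k * of_real (a * alpha p + b * beta p + c)"
      by (simp add: algebra_simps)
    show ?thesis
      unfolding e mult_eq_0_iff of_real_eq_0_iff using noncollinear assms(5) by simp
  qed
  then show "tangent_affine m0 m1 m2 X Y 0 = {x. W * (a * alpha x + b * beta x + c) = 0}"
    unfolding tangent_affine_at_infinity assms(2-4) by simp
  have "alpha m0 = 0" "beta m0 = 0"
    unfolding alpha_def beta_def wedge_def by simp_all
  then have "m0 \<notin> {x. W * (a * alpha x + b * beta x + c) = 0}"
    using noncollinear assms(6) by simp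
  then show "{x. W * (a * alpha x + b * beta x + c) = 0} \<noteq> UNIV"
    by blast
qed

lemma hcoord_edge_directions:
  "hcoord1 (of_real (fst m1 - fst m2)) (of_real (snd m1 - snd m2)) 0 = 1"
  "hcoord2 (of_real (fst m1 - fst m2)) (of_real (snd m1 - snd m2)) 0 = -1"
  "hcoord1 (of_real (fst m2 - fst m0)) (of_real (snd m2 - snd m0)) 0 = 0"
  "hcoord2 (of_real (fst m2 - fst m0)) (of_real (snd m2 - snd m0)) 0 = 1"
  "hcoord1 (of_real (fst m0 - fst m1)) (of_real (snd m0 - snd m1)) 0 = -1"
  "hcoord2 (of_real (fst m0 - fst m1)) (of_real (snd m0 - snd m1)) 0 = 0"
proof -
  have h: "hcoord1 (of_real (fst v)) (of_real (snd v)) 0 = of_real (wedge v e2 / W)"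
    "hcoord2 (of_real (fst v)) (of_real (snd v)) 0 = of_real (wedge e1 v / W)" for v
    using hcoord_of_real[where u = 0 and x = v] by simp_all
  have "wedge (m1 - m2) e2 = W" "wedge e1 (m1 - m2) = - W" "wedge (m2 - m0) e2 = 0"
    "wedge e1 (m2 - m0) = W" "wedge (m0 - m1) e2 = - W" "wedge e1 (m0 - m1) = 0"
    unfolding edge_vectors W_eq_wedge wedge_def by (simp_all add: algebra_simps)
  then show "hcoord1 (of_real (fst m1 - fst m2)) (of_real (snd m1 - snd m2)) 0 = 1"
    "hcoord2 (of_real (fst m1 - fst m2)) (of_real (snd m1 - snd m2)) 0 = -1"
    "hcoord1 (of_real (fst m2 - fst m0)) (of_real (snd m2 - snd m0)) 0 = 0"
    "hcoord2 (of_real (fst m2 - fst m0)) (of_real (snd m2 - snd m0)) 0 = 1"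
    "hcoord1 (of_real (fst m0 - fst m1)) (of_real (snd m0 - snd m1)) 0 = -1"
    "hcoord2 (of_real (fst m0 - fst m1)) (of_real (snd m0 - snd m1)) 0 = 0"
    using h[of "m1 - m2"] h[of "m2 - m0"] h[of "m0 - m1"] noncollinear by simp_all
qed

lemma asymptotes:
  "is_asymptote_at m0 m1 m2 (of_real (fst m1 - fst m2)) (of_real (snd m1 - snd m2))
     {x. 4 * wedge (m1 - m2) (x - m0) - 3 * W = 0}"
  "is_asymptote_at m0 m1 m2 (of_real (fst m2 - fst m0)) (of_real (snd m2 - snd m0))
     {x. 4 * wedge (m2 - m0) (x - m1) - 3 * W = 0}"
  "is_asymptote_at m0 m1 m2 (of_real (fst m0 - fst m1)) (of_real (snd m0 - snd m1))
     {x. 4 * wedge (m0 - m1) (x - m2) - 3 * W = 0}"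
proof -
  define M where "M = gram22 + gram11 - 2 * gram12"
  have M: "M \<noteq> 0" "gram11 \<noteq> 0" "gram22 \<noteq> 0"
    unfolding M_def by (fact gram_nonzero)+
  have lines:
    "{x. 4 * wedge (m1 - m2) (x - m0) - 3 * W = 0} = {x. W * (4 * alpha x + 4 * beta x + -3) = 0}"
    "{x. 4 * wedge (m2 - m0) (x - m1) - 3 * W = 0} = {x. W * (-4 * alpha x + 0 * beta x + 1) = 0}"
    "{x. 4 * wedge (m0 - m1) (x - m2) - 3 * W = 0} = {x. W * (0 * alpha x + -4 * beta x + 1) = 0}"
    by (simp_all add: wedge_edges_in_frame algebra_simps)
  have ideal: "is_ideal_point m0 m1 m2 (of_real (fst m1 - fst m2)) (of_real (snd m1 - snd m2))"
    "is_ideal_point m0 m1 m2 (of_real (fst m2 - fst m0)) (of_real (snd m2 - snd m0))"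
    "is_ideal_point m0 m1 m2 (of_real (fst m0 - fst m1)) (of_real (snd m0 - snd m1))"
    unfolding ideal_points by (simp_all only: same_ideal_refl simp_thms)
  show "is_asymptote_at m0 m1 m2 (of_real (fst m1 - fst m2)) (of_real (snd m1 - snd m2))
      {x. 4 * wedge (m1 - m2) (x - m0) - 3 * W = 0}"
    unfolding lines
    by (rule is_asymptote_at_frame_line[where k = "16 * M^2 * gram22 * gram11"])
      (use ideal M in \<open>simp_all add: hcoord_edge_directions frame_form_partials_at_1_m1 M_def[symmetric] mult_ac
         del: of_real_diff\<close>)
  show "is_asymptote_at m0 m1 m2 (of_real (fst m2 - fst m0)) (of_real (snd m2 - snd m0))
      {x. 4 * wedge (m2 - m0) (x - m1) - 3 * W = 0}"
    unfolding lines
    by (rule is_asymptote_at_frame_line[where k = "16 * M * gram22^2 * gram11"])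
      (use ideal M in \<open>simp_all add: hcoord_edge_directions frame_form_partials_at_0_1 M_def[symmetric] mult_ac
         del: of_real_diff\<close>)
  show "is_asymptote_at m0 m1 m2 (of_real (fst m0 - fst m1)) (of_real (snd m0 - snd m1))
      {x. 4 * wedge (m0 - m1) (x - m2) - 3 * W = 0}"
    unfolding lines
    by (rule is_asymptote_at_frame_line[where k = "16 * M * gram22 * gram11^2"])
      (use ideal M in \<open>simp_all add: hcoord_edge_directions frame_form_partials_at_m1_0 M_def[symmetric] mult_ac
         del: of_real_diff\<close>)
qed

lemma asymptotes_disjoint:
  "{x. 4 * wedge (m1 - m2) (x - m0) - 3 * W = 0} \<inter> {x. 4 * wedge (m2 - m0) (x - m1) - 3 * W = 0}
     \<inter> {x. 4 * wedge (m0 - m1) (x - m2) - 3 * W = 0} = {}"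
  using noncollinear by (auto simp: wedge_edges_in_frame)

end

theorem mainTheorem3:
  fixes m0 m1 m2 :: "real \<times> real"
  assumes noncollinear: "Wdet m0 m1 m2 \<noteq> 0"
  defines "W \<equiv> Wdet m0 m1 m2"
  defines "L0 \<equiv> {x. 4 * wedge (m1 - m2) (x - m0) - 3 * W = 0}"
      and "L1 \<equiv> {x. 4 * wedge (m2 - m0) (x - m1) - 3 * W = 0}"
      and "L2 \<equiv> {x. 4 * wedge (m0 - m1) (x - m2) - 3 * W = 0}"
  shows "(\<forall>X Y. is_ideal_point m0 m1 m2 X Y \<longleftrightarrow>
            same_ideal X Y (of_real (fst m1 - fst m2)) (of_real (snd m1 - snd m2)) \<or>
            same_ideal X Y (of_real (fst m2 - fst m0)) (of_real (snd m2 - snd m0)) \<or>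
            same_ideal X Y (of_real (fst m0 - fst m1)) (of_real (snd m0 - snd m1)) \<or>
            same_ideal X Y 1 \<i> \<or>
            same_ideal X Y 1 (- \<i>))
    \<and> is_asymptote_at m0 m1 m2 (of_real (fst m1 - fst m2)) (of_real (snd m1 - snd m2)) L0
    \<and> is_asymptote_at m0 m1 m2 (of_real (fst m2 - fst m0)) (of_real (snd m2 - snd m0)) L1
    \<and> is_asymptote_at m0 m1 m2 (of_real (fst m0 - fst m1)) (of_real (snd m0 - snd m1)) L2
    \<and> L0 \<inter> L1 \<inter> L2 = {}"
proof -
  interpret noncollinear_triple m0 m1 m2
    using noncollinear by unfold_locales
  show ?thesis
    unfolding L0_def L1_def L2_def W_def
    using ideal_points asymptotes asymptotes_disjoint by blast
qed

end
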